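(* For every positive integer $s$ there exist positive reals $\alpha_s,\beta_s$ such that for every $n\ge1$ and every valid pair $(\mathbf{x},\mathbf{k})$ of length $s$, $$\alpha_s\frac{n^{3/2}}{\prod'_i m_i^{3/2}}\le \Pr[A(\mathbf{x},\mathbf{k})]\le \beta_s\frac{n^{3/2}}{\prod'_i m_i^{3/2}},$$ where $\prod'$ denotes the product over those $0\le i\le s$ with $m_i\ne0$.
   Context: $C$ is a uniformly random Catalan-arc matching on the points $1,\dots,2n$ (a perfect matching with no $a<b<c<d$ such that $\{a,c\},\{b,d\}$ are both arcs). For $s$-tuples of positive integers $\mathbf{x}=(x_1<\dots<x_s)$, $\mathbf{k}=(k_1,\dots,k_s)$, $(\mathbf{x},\mathbf{k})$ is a valid pair if (1) $1\le x_i<x_i+2k_i-1\le 2n$; (2) the integers $x_i,x_i+2k_i-1$ ($1\le i\le s$) are all distinct; (3) there are no $i\ne j$ with $x_i<x_j<x_i+2k_i-1<x_j+2k_j-1$. $A(\mathbf{x},\mathbf{k})$ is the event that $x_i$ and $x_i+2k_i-1$ are joined by an arc of $C$ for all $i$. With $I_i=[x_i,x_i+2k_i-1]$, for $1\le i\le s$ let $M_i$ be the set of $x$ with $x_i<x<x_i+2k_i-1$ lying in no $I_j$ with $j\ne i$, $I_j\subset I_i$; let $M_0$ be the set of $x\in\{1,\dots,2n\}$ lying in no $I_i$; $m_i=|M_i|/2$. *)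

theory Defs
  imports Complex_Main
begin

definition perfect_matching :: "nat \<Rightarrow> (nat \<times> nat) set \<Rightarrow> bool" where
  "perfect_matching n M \<longleftrightarrow>
     M \<subseteq> {(a,b). 1 \<le> a \<and> a < b \<and> b \<le> 2*n} \<and>
     (\<forall>v\<in>{1..2*n}. \<exists>!p. p \<in> M \<and> (fst p = v \<or> snd p = v))"

definition noncrossing :: "(nat \<times> nat) set \<Rightarrow> bool" where
  "noncrossing M \<longleftrightarrow> \<not> (\<exists>a b c d. a < b \<and> b < c \<and> c < d \<and> (a,c) \<in> M \<and> (b,d) \<in> M)"

definition catalan_matchings :: "nat \<Rightarrow> (nat \<times> nat) set set" where
  "catalan_matchings n = {M. perfect_matching n M \<and> noncrossing M}"

text \<open>Right endpoint x_i + 2 k_i - 1 (indices are 0-based: i < s).\<close>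
definition rend :: "(nat \<Rightarrow> nat) \<Rightarrow> (nat \<Rightarrow> nat) \<Rightarrow> nat \<Rightarrow> nat" where
  "rend x k i = x i + 2 * k i - 1"

definition valid_pair :: "nat \<Rightarrow> nat \<Rightarrow> (nat \<Rightarrow> nat) \<Rightarrow> (nat \<Rightarrow> nat) \<Rightarrow> bool" where
  "valid_pair n s x k \<longleftrightarrow>
     (\<forall>i<s. \<forall>j<s. i < j \<longrightarrow> x i < x j) \<and>
     (\<forall>i<s. 0 < k i \<and> 1 \<le> x i \<and> x i < rend x k i \<and> rend x k i \<le> 2*n) \<and>
     (\<forall>i<s. \<forall>j<s. i \<noteq> j \<longrightarrow>
        x i \<noteq> x j \<and> x i \<noteq> rend x k j \<and> rend x k i \<noteq> rend x k j) \<and>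
     (\<forall>i<s. \<forall>j<s. i \<noteq> j \<longrightarrow> \<not> (x i < x j \<and> x j < rend x k i \<and> rend x k i < rend x k j))"

definition probA :: "nat \<Rightarrow> nat \<Rightarrow> (nat \<Rightarrow> nat) \<Rightarrow> (nat \<Rightarrow> nat) \<Rightarrow> real" where
  "probA n s x k =
     real (card {M \<in> catalan_matchings n. \<forall>i<s. (x i, rend x k i) \<in> M})
     / real (card (catalan_matchings n))"

text \<open>M_i for the interval with 0-based index i < s (paper's M_{i+1}).\<close>
definition Mset :: "nat \<Rightarrow> (nat \<Rightarrow> nat) \<Rightarrow> (nat \<Rightarrow> nat) \<Rightarrow> nat \<Rightarrow> nat set" where
  "Mset s x k i = {v. x i < v \<and> v < rend x k i \<and>
      (\<forall>j<s. j \<noteq> i \<and> {x j..rend x k j} \<subseteq> {x i..rend x k i} \<longrightarrow> v \<notin> {x j..rend x k j})}"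

definition M0 :: "nat \<Rightarrow> nat \<Rightarrow> (nat \<Rightarrow> nat) \<Rightarrow> (nat \<Rightarrow> nat) \<Rightarrow> nat set" where
  "M0 n s x k = {v \<in> {1..2*n}. \<forall>i<s. v \<notin> {x i..rend x k i}}"

definition prod_m :: "nat \<Rightarrow> nat \<Rightarrow> (nat \<Rightarrow> nat) \<Rightarrow> (nat \<Rightarrow> nat) \<Rightarrow> real" where
  "prod_m n s x k =
     (let m0 = real (card (M0 n s x k)) / 2 in if m0 \<noteq> 0 then m0 powr (3/2) else 1) *
     (\<Prod>i\<in>{i. i < s \<and> real (card (Mset s x k i)) / 2 \<noteq> 0}.
         (real (card (Mset s x k i)) / 2) powr (3/2))"

end

(*
  Fixing the arcs (x_i, x_i + 2 k_i - 1) cuts {1..2n} into the faces M_0, ..., M_s, and a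
  noncrossing perfect matching containing these arcs is the same thing as an independent
  noncrossing perfect matching of every face.  Hence
    P[A(x,k)] = C(m_0) C(m_1) ... C(m_s) / C(n),   n = m_0 + m_1 + ... + m_s + s,
  with the Catalan numbers C.  The estimate 4^m / (6 m^(3/2)) <= C(m) <= 4^m / m^(3/2)
  (read m^(3/2) as 1 for m = 0) turns this into the claim, since the powers of 4 cancel up
  to the factor 4^s.
*)
theory Submission
  imports Defs "HOL-Computational_Algebra.Formal_Power_Series"
begin

section \<open>Catalan numbers\<close>

definition sqrt_series_coeff :: "nat \<Rightarrow> real" where
  "sqrt_series_coeff k = ((1/2) gchoose k) * (-4) ^ k"

lemma sqrt_series_coeff_0: "sqrt_series_coeff 0 = 1"
  by (simp add: sqrt_series_coeff_def)

lemma sqrt_series_coeff_Suc: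
  "sqrt_series_coeff (Suc k) = sqrt_series_coeff k * (4 * real k - 2) / (real k + 1)"
proof -
  define g g' where "g = (1/2 :: real) gchoose k" and "g' = (1/2 :: real) gchoose Suc k"
  have "1/2 * g = real k * g + real (Suc k) * g'"
    unfolding g_def g'_def by (rule gbinomial_mult_1)
  then have "g' * (-4) * (real k + 1) = g * (4 * real k - 2)"
    by (simp add: algebra_simps)
  then have "sqrt_series_coeff (Suc k) * (real k + 1) = sqrt_series_coeff k * (4 * real k - 2)"
    unfolding sqrt_series_coeff_def g_def[symmetric] g'_def[symmetric] power_Suc
    by (metis mult.assoc mult.left_commute)
  then show ?thesis
    by (simp add: field_simps)
qed

lemma sqrt_series_coeff_convolution:
  assumes "N \<ge> 2"
  shows "(\<Sum>k\<le>N. sqrt_series_coeff k * sqrt_series_coeff (N - k)) = 0"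
proof -
  have "(\<Sum>k\<le>N. sqrt_series_coeff k * sqrt_series_coeff (N - k))
      = (\<Sum>k\<le>N. (1/2 gchoose k) * (1/2 gchoose (N - k))) * (-4) ^ N"
    unfolding sqrt_series_coeff_def sum_distrib_right
    by (rule sum.cong) (auto simp: power_add[symmetric])
  also have "(\<Sum>k\<le>N. (1/2 gchoose k) * (1/2 gchoose (N - k))) = (1::real) gchoose N"
    using gbinomial_Vandermonde[of "1/2 :: real" "1/2" N] by (simp add: atMost_atLeast0)
  also have "(1::real) gchoose N = 0"
    using binomial_gbinomial[of 1 N, where 'a=real] assms by (simp add: binomial_eq_0)
  finally show ?thesis by simp
qed

text \<open>The Catalan numbers as the coefficients of \<open>(1 - sqrt (1 - 4 x)) / (2 x)\<close>: with this
  definition their convolution recurrence is the identity \<open>sqrt (1 - 4 x) ^ 2 = 1 - 4 x\<close>,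
  that is, Vandermonde's identity for \<open>1/2 + 1/2 = 1\<close>.\<close>
definition catalan :: "nat \<Rightarrow> real" where
  "catalan m = - sqrt_series_coeff (Suc m) / 2"

lemma catalan_0: "catalan 0 = 1"
  by (simp add: catalan_def sqrt_series_coeff_Suc sqrt_series_coeff_0)

lemma catalan_Suc: "catalan (Suc m) = catalan m * (4 * real m + 2) / (real m + 2)"
  unfolding catalan_def by (subst sqrt_series_coeff_Suc) (simp add: field_simps)

lemma catalan_convolution: "(\<Sum>i\<le>m. catalan i * catalan (m - i)) = catalan (Suc m)"
proof -
  let ?c = sqrt_series_coeff
  have "0 = (\<Sum>k\<le>Suc (Suc m). ?c k * ?c (Suc (Suc m) - k))"
    using sqrt_series_coeff_convolution[of "Suc (Suc m)"] by simp
  also have "\<dots> = 2 * ?c (Suc (Suc m)) + (\<Sum>i\<le>m. ?c (Suc i) * ?c (Suc (Suc m) - Suc i))"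
    unfolding sum.atMost_Suc_shift[of _ "Suc m"] sum.atMost_Suc[of _ m]
    by (simp add: sqrt_series_coeff_0)
  also have "(\<Sum>i\<le>m. ?c (Suc i) * ?c (Suc (Suc m) - Suc i)) = (\<Sum>i\<le>m. ?c (Suc i) * ?c (Suc (m - i)))"
    by (rule sum.cong) (auto simp: Suc_diff_le)
  also have "(\<Sum>i\<le>m. ?c (Suc i) * ?c (Suc (m - i))) = 4 * (\<Sum>i\<le>m. catalan i * catalan (m - i))"
    by (simp add: catalan_def sum_distrib_left)
  finally show ?thesis
    by (simp add: catalan_def)
qed

text \<open>This is \<open>(2 m choose m) / 4 ^ m\<close>.\<close>
definition central_binomial_scaled :: "nat \<Rightarrow> real" where
  "central_binomial_scaled m = catalan m * (real m + 1) / 4 ^ m"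

lemma central_binomial_scaled_0: "central_binomial_scaled 0 = 1"
  by (simp add: central_binomial_scaled_def catalan_0)

lemma central_binomial_scaled_Suc:
  "central_binomial_scaled (Suc m) = central_binomial_scaled m * (2 * real m + 1) / (2 * real m + 2)"
proof -
  have "catalan (Suc m) * (real m + 2) = catalan m * (2 * (2 * real m + 1))"
    unfolding catalan_Suc by simp
  then have "central_binomial_scaled (Suc m) = catalan m * (2 * real m + 1) / (2 * 4 ^ m)"
    unfolding central_binomial_scaled_def by (simp add: field_simps)
  also have "\<dots> = central_binomial_scaled m * (2 * real m + 1) / (2 * real m + 2)"
    unfolding central_binomial_scaled_def by (simp add: divide_simps) (simp add: algebra_simps)
  finally show ?thesis .
qed

lemma central_binomial_scaled_pos: "central_binomial_scaled m > 0"
  by (induction m) (simp_all add: central_binomial_scaled_0 central_binomial_scaled_Suc)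

lemma central_binomial_scaled_sq_upper: "(central_binomial_scaled m)\<^sup>2 * (3 * real m + 1) \<le> 1"
proof (induction m)
  case 0
  then show ?case by (simp add: central_binomial_scaled_0)
next
  case (Suc m)
  let ?b = "central_binomial_scaled m"
  have key: "(2 * real m + 1)\<^sup>2 * (3 * real m + 4) \<le> (2 * real m + 2)\<^sup>2 * (3 * real m + 1)"
    by (simp add: power2_eq_square algebra_simps)
  have "(central_binomial_scaled (Suc m))\<^sup>2 * (3 * real (Suc m) + 1)
      = ?b\<^sup>2 * ((2 * real m + 1)\<^sup>2 * (3 * real m + 4)) / (2 * real m + 2)\<^sup>2"
    by (simp add: central_binomial_scaled_Suc power2_eq_square field_simps)
  also have "\<dots> \<le> ?b\<^sup>2 * ((2 * real m + 2)\<^sup>2 * (3 * real m + 1)) / (2 * real m + 2)\<^sup>2"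
    by (intro divide_right_mono mult_left_mono key) auto
  also have "\<dots> = ?b\<^sup>2 * (3 * real m + 1)"
    by simp
  finally show ?case
    using Suc.IH by simp
qed

lemma central_binomial_scaled_sq_lower: "1 \<le> (central_binomial_scaled m)\<^sup>2 * (4 * real m + 1)"
proof (induction m)
  case 0
  then show ?case by (simp add: central_binomial_scaled_0)
next
  case (Suc m)
  let ?b = "central_binomial_scaled m"
  have key: "(2 * real m + 2)\<^sup>2 * (4 * real m + 1) \<le> (2 * real m + 1)\<^sup>2 * (4 * real m + 5)"
    by (simp add: power2_eq_square algebra_simps)
  have "?b\<^sup>2 * (4 * real m + 1) = ?b\<^sup>2 * ((2 * real m + 2)\<^sup>2 * (4 * real m + 1)) / (2 * real m + 2)\<^sup>2"
    by simp
  also have "\<dots> \<le> ?b\<^sup>2 * ((2 * real m + 1)\<^sup>2 * (4 * real m + 5)) / (2 * real m + 2)\<^sup>2"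
    by (intro divide_right_mono mult_left_mono key) auto
  also have "\<dots> = (central_binomial_scaled (Suc m))\<^sup>2 * (4 * real (Suc m) + 1)"
    by (simp add: central_binomial_scaled_Suc power2_eq_square field_simps)
  finally show ?case
    using Suc.IH by simp
qed

text \<open>The value at \<open>0\<close> makes products of weights the paper's restricted products \<open>\<Prod>'\<close>.\<close>
definition catalan_weight :: "nat \<Rightarrow> real" where
  "catalan_weight m = (if m = 0 then 1 else real m powr (3/2))"

lemma catalan_weight_pos: "catalan_weight m > 0"
  by (simp add: catalan_weight_def)

lemma catalan_weight_eq_sqrt: "m > 0 \<Longrightarrow> catalan_weight m = real m * sqrt (real m)"
  using powr_add[of "real m" 1 "1/2"] by (simp add: catalan_weight_def powr_half_sqrt)

lemma catalan_eq_central_binomial_scaled: "catalan m = 4 ^ m * central_binomial_scaled m / (real m + 1)"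
  by (simp add: central_binomial_scaled_def)

lemma catalan_upper: "catalan m \<le> 4 ^ m / catalan_weight m"
proof (cases "m = 0")
  case True
  then show ?thesis by (simp add: catalan_0 catalan_weight_def)
next
  case False
  let ?b = "central_binomial_scaled m"
  have "(?b * sqrt (real m))\<^sup>2 \<le> 1\<^sup>2"
    using central_binomial_scaled_sq_upper[of m] mult_left_mono[of "real m" "3 * real m + 1" "?b\<^sup>2"]
    by (simp add: power_mult_distrib)
  then have "?b * sqrt (real m) \<le> 1"
    by (rule power2_le_imp_le) simp
  moreover have "0 \<le> real m / (real m + 1)" "real m / (real m + 1) \<le> 1"
    by simp_all
  ultimately have le_1: "?b * sqrt (real m) * (real m / (real m + 1)) \<le> 1"
    by (rule mult_le_one)
  have "catalan m * catalan_weight m = 4 ^ m * (?b * sqrt (real m) * (real m / (real m + 1)))"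
    using False by (simp add: catalan_eq_central_binomial_scaled catalan_weight_eq_sqrt)
  also have "\<dots> \<le> 4 ^ m * 1"
    using le_1 by (rule mult_left_mono) simp
  finally show ?thesis
    using catalan_weight_pos[of m] by (simp add: pos_le_divide_eq)
qed

lemma catalan_lower: "4 ^ m / (6 * catalan_weight m) \<le> catalan m"
proof (cases "m = 0")
  case True
  then show ?thesis by (simp add: catalan_0 catalan_weight_def)
next
  case False
  let ?b = "central_binomial_scaled m"
  have "1\<^sup>2 \<le> (3 * ?b * sqrt (real m))\<^sup>2"
    using central_binomial_scaled_sq_lower[of m] mult_left_mono[of "4 * real m + 1" "9 * real m" "?b\<^sup>2"] False
    by (simp add: power_mult_distrib)
  then have "1 \<le> 3 * ?b * sqrt (real m)"
    by (rule power2_le_imp_le) (use central_binomial_scaled_pos[of m] in simp)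
  moreover have "1 \<le> 2 * real m / (real m + 1)"
    using False by simp
  ultimately have ge_1: "1 \<le> 3 * ?b * sqrt (real m) * (2 * real m / (real m + 1))"
    using mult_mono[of 1 "3 * ?b * sqrt (real m)" 1 "2 * real m / (real m + 1)"] by simp
  have "4 ^ m * 1 \<le> 4 ^ m * (3 * ?b * sqrt (real m) * (2 * real m / (real m + 1)))"
    using ge_1 by (rule mult_left_mono) simp
  also have "\<dots> = catalan m * (6 * catalan_weight m)"
    using False by (simp add: catalan_eq_central_binomial_scaled catalan_weight_eq_sqrt)
  finally show ?thesis
    using catalan_weight_pos[of m] by (simp add: pos_divide_le_eq)
qed

lemma catalan_pos: "catalan m > 0"
proof -
  have "0 < 4 ^ m / (6 * catalan_weight m)"
    using catalan_weight_pos[of m] by simp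
  then show ?thesis
    using catalan_lower[of m] by linarith
qed

lemma catalan_prod_upper:
  "(\<Prod>i\<in>I. catalan (m i)) \<le> 4 ^ (\<Sum>i\<in>I. m i) / (\<Prod>i\<in>I. catalan_weight (m i))"
proof -
  have "(\<Prod>i\<in>I. catalan (m i)) \<le> (\<Prod>i\<in>I. 4 ^ m i / catalan_weight (m i))"
    using catalan_upper catalan_pos by (intro prod_mono) (simp add: less_imp_le)
  also have "\<dots> = 4 ^ (\<Sum>i\<in>I. m i) / (\<Prod>i\<in>I. catalan_weight (m i))"
    by (simp add: prod_dividef power_sum)
  finally show ?thesis .
qed

lemma catalan_prod_lower:
  "4 ^ (\<Sum>i\<in>I. m i) / (6 ^ card I * (\<Prod>i\<in>I. catalan_weight (m i))) \<le> (\<Prod>i\<in>I. catalan (m i))"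
proof -
  have "4 ^ (\<Sum>i\<in>I. m i) / (6 ^ card I * (\<Prod>i\<in>I. catalan_weight (m i)))
      = (\<Prod>i\<in>I. 4 ^ m i / (6 * catalan_weight (m i)))"
    by (simp add: prod_dividef power_sum prod.distrib)
  also have "\<dots> \<le> (\<Prod>i\<in>I. catalan (m i))"
    using catalan_lower catalan_weight_pos by (intro prod_mono) (simp add: less_imp_le)
  finally show ?thesis .
qed

lemma catalan_ratio_bounds:
  assumes n: "n = m0 + (\<Sum>i<s. m i) + s"
  defines "W \<equiv> catalan_weight m0 * (\<Prod>i<s. catalan_weight (m i))"
    and "Q \<equiv> catalan m0 * (\<Prod>i<s. catalan (m i))"
  shows "Q / catalan n \<le> 6 * catalan_weight n / W"
    and "catalan_weight n / (4 ^ s * 6 ^ (s + 1) * W) \<le> Q / catalan n"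
proof -
  define E where "E = m0 + (\<Sum>i<s. m i)"
  have pos: "W > 0" "catalan_weight n > 0" "Q > 0"
    unfolding W_def Q_def by (simp_all add: catalan_weight_pos catalan_pos prod_pos)
  have "Q \<le> (4 ^ m0 / catalan_weight m0) * (4 ^ (\<Sum>i<s. m i) / (\<Prod>i<s. catalan_weight (m i)))"
    unfolding Q_def using catalan_pos catalan_weight_pos
    by (intro mult_mono catalan_upper catalan_prod_upper) (auto intro: less_imp_le prod_nonneg)
  then have Q_upper: "Q \<le> 4 ^ E / W"
    by (simp add: E_def W_def power_add)
  have "(4 ^ m0 / (6 * catalan_weight m0)) * (4 ^ (\<Sum>i<s. m i) / (6 ^ s * (\<Prod>i<s. catalan_weight (m i)))) \<le> Q"
    unfolding Q_def using catalan_pos catalan_weight_pos catalan_prod_lower[of m "{..<s}"]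
      prod_pos[of "{..<s}" "\<lambda>i. catalan_weight (m i)"]
    by (intro mult_mono catalan_lower) (auto intro: less_imp_le prod_nonneg)
  then have Q_lower: "4 ^ E / (6 ^ (s + 1) * W) \<le> Q"
    by (simp add: E_def W_def power_add ac_simps)
  have cat_n: "4 ^ s * 4 ^ E / (6 * catalan_weight n) \<le> catalan n" "catalan n \<le> 4 ^ s * 4 ^ E / catalan_weight n"
    using catalan_lower[of n] catalan_upper[of n] by (simp_all add: n E_def power_add ac_simps)
  have "Q / catalan n \<le> (4 ^ E / W) / (4 ^ s * 4 ^ E / (6 * catalan_weight n))"
    using Q_upper cat_n(1) pos by (intro frac_le) simp_all
  also have "\<dots> = 6 * catalan_weight n / (4 ^ s * W)"
    using pos by (simp add: field_simps)
  also have "\<dots> \<le> 6 * catalan_weight n / W"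
    using pos by (intro divide_left_mono) simp_all
  finally show "Q / catalan n \<le> 6 * catalan_weight n / W" .
  have "catalan_weight n / (4 ^ s * 6 ^ (s + 1) * W) = (4 ^ E / (6 ^ (s + 1) * W)) / (4 ^ s * 4 ^ E / catalan_weight n)"
    using pos by (simp add: field_simps)
  also have "\<dots> \<le> Q / catalan n"
    using Q_lower cat_n(2) pos catalan_pos[of n] by (intro frac_le) simp_all
  finally show "catalan_weight n / (4 ^ s * 6 ^ (s + 1) * W) \<le> Q / catalan n" .
qed

section \<open>Noncrossing perfect matchings of a finite set\<close>

definition arcs_on :: "nat set \<Rightarrow> (nat \<times> nat) set" where
  "arcs_on S = {(a, b). a < b \<and> a \<in> S \<and> b \<in> S}"

definition covers_once :: "(nat \<times> nat) set \<Rightarrow> nat set \<Rightarrow> bool" where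
  "covers_once M T \<longleftrightarrow> (\<forall>v\<in>T. \<exists>!p. p \<in> M \<and> (fst p = v \<or> snd p = v))"

definition nc_matchings :: "nat set \<Rightarrow> (nat \<times> nat) set set" where
  "nc_matchings S = {M. M \<subseteq> arcs_on S \<and> covers_once M S \<and> noncrossing M}"

lemma arcs_on_ends: "p \<in> arcs_on T \<Longrightarrow> fst p \<in> T \<and> snd p \<in> T"
  by (cases p) (simp add: arcs_on_def)

lemma arcs_on_mono: "T \<subseteq> T' \<Longrightarrow> arcs_on T \<subseteq> arcs_on T'"
  by (auto simp: arcs_on_def)

lemma ex1_Un: "(\<exists>!p. p \<in> A \<and> P p) \<Longrightarrow> (\<And>p. p \<in> B \<Longrightarrow> \<not> P p) \<Longrightarrow> (\<exists>!p. p \<in> A \<union> B \<and> P p)"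
  by (metis Un_iff)

lemma covers_once_Un:
  assumes M: "M1 \<subseteq> arcs_on T1" "M2 \<subseteq> arcs_on T2" and "T1 \<inter> T2 = {}"
    and "covers_once M1 T1" "covers_once M2 T2"
  shows "covers_once (M1 \<union> M2) (T1 \<union> T2)"
  unfolding covers_once_def
proof
  fix v assume v: "v \<in> T1 \<union> T2"
  have untouched: "fst p \<noteq> v \<and> snd p \<noteq> v" if "p \<in> M1 \<and> v \<in> T2 \<or> p \<in> M2 \<and> v \<in> T1" for p
    using that M \<open>T1 \<inter> T2 = {}\<close> arcs_on_ends by blast
  show "\<exists>!p. p \<in> M1 \<union> M2 \<and> (fst p = v \<or> snd p = v)"
  proof (cases "v \<in> T1")
    case True
    then show ?thesis
      using assms(4) untouched unfolding covers_once_def by (intro ex1_Un) auto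
  next
    case False
    then show ?thesis
      using assms(5) untouched v ex1_Un[of M2 _ M1] unfolding covers_once_def by (simp add: Un_commute)
  qed
qed

lemma catalan_matchings_eq_nc_matchings: "catalan_matchings n = nc_matchings {1..2*n}"
proof -
  have "arcs_on {1..2*n} = {(a, b). 1 \<le> a \<and> a < b \<and> b \<le> 2*n}"
    unfolding arcs_on_def by auto
  then show ?thesis
    unfolding catalan_matchings_def nc_matchings_def covers_once_def perfect_matching_def by auto
qed

lemma nc_matchings_finite: "finite S \<Longrightarrow> finite (nc_matchings S)"
proof -
  assume "finite S"
  then have "finite (Pow (arcs_on S))"
    by (simp add: arcs_on_def finite_subset[of _ "S \<times> S"] subset_eq)
  then show ?thesis
    by (rule finite_subset[rotated]) (auto simp: nc_matchings_def)
qed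

lemma nc_matchings_empty: "nc_matchings {} = {{}}"
  by (auto simp: nc_matchings_def covers_once_def arcs_on_def noncrossing_def)

lemma nc_matchings_arc: "M \<in> nc_matchings S \<Longrightarrow> (c, d) \<in> M \<Longrightarrow> c < d \<and> c \<in> S \<and> d \<in> S"
  unfolding nc_matchings_def arcs_on_def by auto

lemma nc_matchings_subset_arcs_on: "M \<in> nc_matchings S \<Longrightarrow> M \<subseteq> arcs_on S"
  unfolding nc_matchings_def by blast

lemma nc_matchings_unique:
  "M \<in> nc_matchings S \<Longrightarrow> v \<in> S \<Longrightarrow> p \<in> M \<Longrightarrow> q \<in> M \<Longrightarrow>
    fst p = v \<or> snd p = v \<Longrightarrow> fst q = v \<or> snd q = v \<Longrightarrow> p = q"
  unfolding nc_matchings_def covers_once_def by blast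

lemma nc_matchings_covers:
  assumes "M \<in> nc_matchings S" "v \<in> S"
  obtains p where "p \<in> M" "fst p = v \<or> snd p = v"
  using assms unfolding nc_matchings_def covers_once_def by blast

lemma nc_matchings_no_crossing:
  "M \<in> nc_matchings S \<Longrightarrow> a < b \<Longrightarrow> b < c \<Longrightarrow> c < d \<Longrightarrow> (a, c) \<in> M \<Longrightarrow> (b, d) \<in> M \<Longrightarrow> False"
  unfolding nc_matchings_def noncrossing_def by blast

lemma noncrossing_subset: "noncrossing M \<Longrightarrow> M' \<subseteq> M \<Longrightarrow> noncrossing M'"
  unfolding noncrossing_def by blast

lemma nc_matchings_restrict_closed:
  assumes M: "M \<in> nc_matchings S" and "T \<subseteq> S"
    and closed: "\<And>p. p \<in> M \<Longrightarrow> fst p \<in> T \<or> snd p \<in> T \<Longrightarrow> p \<in> arcs_on T"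
  shows "M \<inter> arcs_on T \<in> nc_matchings T"
proof -
  have "\<exists>!p. p \<in> M \<inter> arcs_on T \<and> (fst p = v \<or> snd p = v)" if "v \<in> T" for v
  proof -
    have "v \<in> S"
      using that \<open>T \<subseteq> S\<close> by blast
    then obtain p where "p \<in> M" "fst p = v \<or> snd p = v"
      by (rule nc_matchings_covers[OF M])
    then show ?thesis
      using closed[of p] nc_matchings_unique[OF M, of v p] that \<open>T \<subseteq> S\<close> by blast
  qed
  moreover have "noncrossing (M \<inter> arcs_on T)"
    using M noncrossing_subset[of M] by (simp add: nc_matchings_def)
  ultimately show ?thesis
    by (simp add: nc_matchings_def covers_once_def)
qed

definition inner :: "nat set \<Rightarrow> nat \<Rightarrow> nat \<Rightarrow> nat set" where
  "inner S a b = {v \<in> S. a < v \<and> v < b}"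

definition outer :: "nat set \<Rightarrow> nat \<Rightarrow> nat \<Rightarrow> nat set" where
  "outer S a b = {v \<in> S. v < a \<or> b < v}"

lemma nc_matchings_restrict:
  assumes M: "M \<in> nc_matchings S" and ab: "(a, b) \<in> M"
  shows "M \<inter> arcs_on (inner S a b) \<in> nc_matchings (inner S a b)"
    and "M \<inter> arcs_on (outer S a b) \<in> nc_matchings (outer S a b)"
    and "M = insert (a, b) (M \<inter> arcs_on (inner S a b) \<union> M \<inter> arcs_on (outer S a b))"
proof -
  have other_arc: "(c, d) \<in> arcs_on (inner S a b) \<or> (c, d) \<in> arcs_on (outer S a b)"
    if "(c, d) \<in> M" "(c, d) \<noteq> (a, b)" for c d
  proof -
    have "c \<noteq> a" "d \<noteq> a" "c \<noteq> b" "d \<noteq> b"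
      using that nc_matchings_unique[OF M _ ab, of _ "(c, d)"] nc_matchings_arc[OF M] ab by auto
    moreover have "\<not> (a < c \<and> c < b \<and> b < d)" "\<not> (c < a \<and> a < d \<and> d < b)"
      using nc_matchings_no_crossing[OF M] ab that(1) by blast+
    ultimately show ?thesis
      using nc_matchings_arc[OF M that(1)] nc_matchings_arc[OF M ab]
      unfolding arcs_on_def inner_def outer_def by auto
  qed
  then show "M = insert (a, b) (M \<inter> arcs_on (inner S a b) \<union> M \<inter> arcs_on (outer S a b))"
    using ab by auto
  have "p \<in> arcs_on (inner S a b)" if "p \<in> M" "fst p \<in> inner S a b \<or> snd p \<in> inner S a b" for p
    using other_arc[of "fst p" "snd p"] that nc_matchings_arc[OF M ab]
    by (auto simp: arcs_on_def inner_def outer_def)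
  then show "M \<inter> arcs_on (inner S a b) \<in> nc_matchings (inner S a b)"
    by (intro nc_matchings_restrict_closed[OF M]) (auto simp: inner_def)
  have "p \<in> arcs_on (outer S a b)" if "p \<in> M" "fst p \<in> outer S a b \<or> snd p \<in> outer S a b" for p
    using other_arc[of "fst p" "snd p"] that nc_matchings_arc[OF M ab]
    by (auto simp: arcs_on_def inner_def outer_def)
  then show "M \<inter> arcs_on (outer S a b) \<in> nc_matchings (outer S a b)"
    by (intro nc_matchings_restrict_closed[OF M]) (auto simp: outer_def)
qed

lemma nc_matchings_join:
  assumes ab: "a \<in> S" "b \<in> S" "a < b"
    and M1: "M1 \<in> nc_matchings (inner S a b)" and M2: "M2 \<in> nc_matchings (outer S a b)"
  shows "insert (a, b) (M1 \<union> M2) \<in> nc_matchings S"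
proof -
  let ?M = "insert (a, b) (M1 \<union> M2)"
  have arcs1: "a < fst p \<and> fst p < snd p \<and> snd p < b \<and> fst p \<in> S \<and> snd p \<in> S" if "p \<in> M1" for p
    using nc_matchings_arc[OF M1, of "fst p" "snd p"] that by (simp add: inner_def)
  have arcs2: "(fst p < a \<or> b < fst p) \<and> (snd p < a \<or> b < snd p) \<and> fst p < snd p \<and> fst p \<in> S \<and> snd p \<in> S"
    if "p \<in> M2" for p
    using nc_matchings_arc[OF M2, of "fst p" "snd p"] that by (simp add: outer_def)
  have S: "S = ({a, b} \<union> inner S a b) \<union> outer S a b"
    using ab by (auto simp: inner_def outer_def)
  have M1_arcs: "{(a, b)} \<union> M1 \<subseteq> arcs_on ({a, b} \<union> inner S a b)"
    using ab nc_matchings_subset_arcs_on[OF M1] by (auto simp: arcs_on_def)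
  moreover have "covers_once ({(a, b)} \<union> M1) ({a, b} \<union> inner S a b)"
    using ab M1 nc_matchings_subset_arcs_on[OF M1]
    by (intro covers_once_Un) (auto simp: nc_matchings_def covers_once_def arcs_on_def inner_def)
  moreover have "inner S a b \<inter> outer S a b = {}" "a \<notin> outer S a b" "b \<notin> outer S a b"
    using ab(3) by (auto simp: inner_def outer_def)
  ultimately have "covers_once ({(a, b)} \<union> M1 \<union> M2) ({a, b} \<union> inner S a b \<union> outer S a b)"
    using M2 nc_matchings_subset_arcs_on[OF M2]
    by (intro covers_once_Un[of _ "{a, b} \<union> inner S a b"]) (auto simp: nc_matchings_def)
  then have "covers_once ?M ({a, b} \<union> inner S a b \<union> outer S a b)"
    by simp
  then have "covers_once ?M S"
    using S by metis
  moreover have "?M \<subseteq> arcs_on S"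
  proof -
    have "arcs_on ({a, b} \<union> inner S a b) \<subseteq> arcs_on S" "arcs_on (outer S a b) \<subseteq> arcs_on S"
      using ab by (auto intro!: arcs_on_mono simp: inner_def outer_def)
    then show ?thesis
      using M1_arcs nc_matchings_subset_arcs_on[OF M2] by blast
  qed
  moreover have False
    if "x < y" "y < z" "z < w" "(x, z) \<in> ?M" "(y, w) \<in> ?M" for x y z w
    using that nc_matchings_no_crossing[OF M1 that(1-3)] nc_matchings_no_crossing[OF M2 that(1-3)]
      arcs1[of "(x, z)"] arcs1[of "(y, w)"] arcs2[of "(x, z)"] arcs2[of "(y, w)"]
    by auto
  then have "noncrossing ?M"
    unfolding noncrossing_def by blast
  ultimately show ?thesis
    by (simp add: nc_matchings_def)
qed

text \<open>An arc \<open>(a, b)\<close> of a noncrossing matching separates the points between \<open>a\<close> and \<open>b\<close>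
  from all others, so the matchings containing it are pairs of matchings of the two sides.\<close>
lemma card_nc_matchings_containing_split:
  assumes ab: "a \<in> S" "b \<in> S" "a < b"
    and Cin: "Cin \<subseteq> arcs_on (inner S a b)" and Cout: "Cout \<subseteq> arcs_on (outer S a b)"
  shows "card {M \<in> nc_matchings S. insert (a, b) (Cin \<union> Cout) \<subseteq> M}
    = card {M1 \<in> nc_matchings (inner S a b). Cin \<subseteq> M1} * card {M2 \<in> nc_matchings (outer S a b). Cout \<subseteq> M2}"
proof -
  let ?I = "arcs_on (inner S a b)" and ?O = "arcs_on (outer S a b)"
  let ?A = "{M1 \<in> nc_matchings (inner S a b). Cin \<subseteq> M1} \<times> {M2 \<in> nc_matchings (outer S a b). Cout \<subseteq> M2}"
  let ?B = "{M \<in> nc_matchings S. insert (a, b) (Cin \<union> Cout) \<subseteq> M}"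
  let ?join = "\<lambda>(M1, M2). insert (a, b) (M1 \<union> M2)"
  let ?split = "\<lambda>M. (M \<inter> ?I, M \<inter> ?O)"
  have disjoint: "?I \<inter> ?O = {}" "(a, b) \<notin> ?I" "(a, b) \<notin> ?O"
    by (auto simp: arcs_on_def inner_def outer_def)
  have "bij_betw ?join ?A ?B"
  proof (rule bij_betw_byWitness[where f' = ?split])
    show "\<forall>X\<in>?A. ?split (?join X) = X"
    proof
      fix X assume X: "X \<in> ?A"
      obtain M1 M2 where M12: "X = (M1, M2)"
        by (cases X)
      have "M1 \<subseteq> ?I" "M2 \<subseteq> ?O"
        using X nc_matchings_subset_arcs_on unfolding M12 by auto
      then show "?split (?join X) = X"
        using disjoint unfolding M12 by auto
    qed
    show "\<forall>M\<in>?B. ?join (?split M) = M"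
      using nc_matchings_restrict(3) by auto
    show "?join ` ?A \<subseteq> ?B"
      using nc_matchings_join[OF ab] by auto
    show "?split ` ?B \<subseteq> ?A"
      using nc_matchings_restrict(1,2) Cin Cout by auto
  qed
  then have "card ?B = card ?A"
    by (rule bij_betw_same_card[symmetric])
  then show ?thesis
    by (simp only: card_cartesian_product)
qed

definition nc_count :: "nat \<Rightarrow> real" where
  "nc_count N = (if even N then catalan (N div 2) else 0)"

lemma nc_count_double: "nc_count (2 * m) = catalan m"
  by (simp add: nc_count_def)

lemma sum_lessThan_odd_split:
  fixes h :: "nat \<Rightarrow> 'a::comm_monoid_add"
  shows "(\<Sum>t<2*m+1. h t) = (\<Sum>i\<le>m. h (2*i)) + (\<Sum>i<m. h (2*i+1))"
  by (induction m) (simp_all add: ac_simps)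

lemma nc_count_rec: "(\<Sum>i<K. nc_count i * nc_count (K - 1 - i)) = nc_count (Suc K)"
proof (cases "even K")
  case True
  have "odd i \<or> odd (K - 1 - i)" if "i < K" for i
    using True that by auto
  then have "(\<Sum>i<K. nc_count i * nc_count (K - 1 - i)) = 0"
    by (intro sum.neutral) (auto simp: nc_count_def)
  then show ?thesis
    using True by (simp add: nc_count_def)
next
  case False
  then obtain m where m: "K = 2*m+1"
    using oddE by blast
  have "(\<Sum>i<K. nc_count i * nc_count (K - 1 - i))
      = (\<Sum>i\<le>m. nc_count (2*i) * nc_count (2*m - 2*i)) + (\<Sum>i<m. nc_count (2*i+1) * nc_count (2*m - (2*i+1)))"
    unfolding m by (subst sum_lessThan_odd_split) simp
  also have "(\<Sum>i<m. nc_count (2*i+1) * nc_count (2*m - (2*i+1))) = 0"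
    by (simp add: nc_count_def)
  also have "(\<Sum>i\<le>m. nc_count (2*i) * nc_count (2*m - 2*i)) = (\<Sum>i\<le>m. catalan i * catalan (m - i))"
    by (intro sum.cong) (auto simp: nc_count_def simp flip: diff_mult_distrib2)
  also have "\<dots> = nc_count (Suc K)"
    unfolding catalan_convolution by (simp add: m nc_count_def)
  finally show ?thesis by simp
qed

lemma bij_betw_rank:
  fixes S :: "'a::linorder set"
  shows "finite S \<Longrightarrow> bij_betw (\<lambda>b. card {u \<in> S. u < b}) S {..<card S}"
proof -
  assume S: "finite S"
  let ?rank = "\<lambda>b. card {u \<in> S. u < b}"
  have rank_less: "?rank b < ?rank c" if b: "b \<in> S" "b < c" for b c
  proof (rule psubset_card_mono)
    show "finite {u \<in> S. u < c}"
      using S by simp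
    have "{u \<in> S. u < b} \<subseteq> {u \<in> S. u < c}"
      using b(2) less_trans by auto
    moreover have "b \<in> {u \<in> S. u < c} - {u \<in> S. u < b}"
      using b by simp
    ultimately show "{u \<in> S. u < b} \<subset> {u \<in> S. u < c}"
      by blast
  qed
  have "inj_on ?rank S"
  proof (rule inj_onI)
    fix b c assume "b \<in> S" "c \<in> S" "?rank b = ?rank c"
    then show "b = c"
      using rank_less[of b c] rank_less[of c b] by (metis linorder_neqE less_irrefl)
  qed
  moreover have "?rank ` S = {..<card S}"
  proof (rule card_subset_eq)
    show "?rank ` S \<subseteq> {..<card S}"
      using S by (auto intro!: psubset_card_mono)
    show "card (?rank ` S) = card {..<card S}"
      using \<open>inj_on ?rank S\<close> by (simp add: card_image)
  qed simp
  ultimately show ?thesis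
    by (simp add: bij_betw_def)
qed

lemma card_nc_matchings_containing_arc:
  assumes "a \<in> S" "b \<in> S" "a < b"
  shows "card {M \<in> nc_matchings S. (a, b) \<in> M} = card (nc_matchings (inner S a b)) * card (nc_matchings (outer S a b))"
  using card_nc_matchings_containing_split[OF assms, of "{}" "{}"] by simp

lemma card_nc_matchings_least:
  assumes S: "finite S" and a: "a \<in> S" "\<And>v. v \<in> S \<Longrightarrow> a \<le> v"
  shows "card (nc_matchings S)
    = (\<Sum>b\<in>S - {a}. card (nc_matchings {u \<in> S - {a}. u < b}) * card (nc_matchings {v \<in> S - {a}. b < v}))"
proof -
  have "\<exists>b\<in>S - {a}. (a, b) \<in> M" if M: "M \<in> nc_matchings S" for M
  proof -
    obtain p where "p \<in> M" "fst p = a \<or> snd p = a"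
      using nc_matchings_covers[OF M a(1)] by blast
    then show ?thesis
      using nc_matchings_arc[OF M, of "fst p" "snd p"] a(2)[of "fst p"] by force
  qed
  then have "nc_matchings S = (\<Union>b\<in>S - {a}. {M \<in> nc_matchings S. (a, b) \<in> M})"
    by blast
  then have "card (nc_matchings S) = card (\<Union>b\<in>S - {a}. {M \<in> nc_matchings S. (a, b) \<in> M})"
    by (rule arg_cong)
  also have "\<dots> = (\<Sum>b\<in>S - {a}. card {M \<in> nc_matchings S. (a, b) \<in> M})"
  proof (rule card_UN_disjoint)
    show "\<forall>b\<in>S - {a}. \<forall>c\<in>S - {a}. b \<noteq> c \<longrightarrow>
        {M \<in> nc_matchings S. (a, b) \<in> M} \<inter> {M \<in> nc_matchings S. (a, c) \<in> M} = {}"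
    proof (intro ballI impI equals0I)
      fix b c M
      assume "b \<noteq> c" "M \<in> {M \<in> nc_matchings S. (a, b) \<in> M} \<inter> {M \<in> nc_matchings S. (a, c) \<in> M}"
      then show False
        using nc_matchings_unique[OF _ a(1), of M "(a, b)" "(a, c)"] by auto
    qed
  qed (use S nc_matchings_finite[OF S] in auto)
  also have "\<dots> = (\<Sum>b\<in>S - {a}. card (nc_matchings {u \<in> S - {a}. u < b}) * card (nc_matchings {v \<in> S - {a}. b < v}))"
  proof (rule sum.cong)
    fix b assume b: "b \<in> S - {a}"
    then have "a < b"
      using a(2) by (simp add: le_neq_implies_less)
    moreover have "inner S a b = {u \<in> S - {a}. u < b}" "outer S a b = {v \<in> S - {a}. b < v}"
      using a(2) \<open>a < b\<close> by (force simp: inner_def outer_def)+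
    ultimately show "card {M \<in> nc_matchings S. (a, b) \<in> M}
        = card (nc_matchings {u \<in> S - {a}. u < b}) * card (nc_matchings {v \<in> S - {a}. b < v})"
      using card_nc_matchings_containing_arc[OF a(1)] b by simp
  qed simp
  finally show ?thesis .
qed

lemma card_nc_matchings: "finite S \<Longrightarrow> real (card (nc_matchings S)) = nc_count (card S)"
proof (induction "card S" arbitrary: S rule: less_induct)
  case less
  show ?case
  proof (cases "S = {}")
    case True
    then show ?thesis by (simp add: nc_matchings_empty nc_count_def catalan_0)
  next
    case False
    define a where "a = Min S"
    define S' where "S' = S - {a}"
    define K where "K = card S'"
    let ?rank = "\<lambda>b. card {u \<in> S'. u < b}"
    have a: "a \<in> S" "\<And>v. v \<in> S \<Longrightarrow> a \<le> v"
      using less.prems False by (simp_all add: a_def)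
    have S': "finite S'" "card S = Suc K"
      using less.prems a(1) card_Suc_Diff1[of S a] unfolding S'_def K_def by simp_all
    have card_right: "card {v \<in> S'. b < v} = K - 1 - ?rank b" if "b \<in> S'" for b
    proof -
      have split: "S' = {u \<in> S'. u < b} \<union> insert b {v \<in> S'. b < v}"
        using that by auto
      have "K = ?rank b + card (insert b {v \<in> S'. b < v})"
        unfolding K_def by (subst (1) split, rule card_Un_disjoint) (use S'(1) in auto)
      then show ?thesis
        using S'(1) by simp
    qed
    have IH: "real (card (nc_matchings T)) = nc_count (card T)" if "T \<subseteq> S'" for T
      using less.hyps[of T] S' card_mono[OF S'(1) that] finite_subset[OF that S'(1)] by (simp add: K_def)
    have "real (card (nc_matchings S))
        = (\<Sum>b\<in>S'. real (card (nc_matchings {u \<in> S'. u < b})) * real (card (nc_matchings {v \<in> S'. b < v})))"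
      using card_nc_matchings_least[OF less.prems a] unfolding S'_def by simp
    also have "\<dots> = (\<Sum>b\<in>S'. nc_count (?rank b) * nc_count (K - 1 - ?rank b))"
      by (intro sum.cong refl) (simp add: IH card_right)
    also have "\<dots> = (\<Sum>i<K. nc_count i * nc_count (K - 1 - i))"
      using bij_betw_rank[OF S'(1)] unfolding K_def by (rule sum.reindex_bij_betw)
    also have "\<dots> = nc_count (card S)"
      unfolding S'(2) by (rule nc_count_rec)
    finally show ?thesis .
  qed
qed

section \<open>Matchings containing a system of arcs\<close>

text \<open>For the arcs of a valid pair, \<open>face\<close> and \<open>outer_face\<close> are the paper's \<open>M\<^sub>i\<close> and \<open>M\<^sub>0\<close>.\<close>
definition face :: "nat set \<Rightarrow> (nat \<times> nat) set \<Rightarrow> nat \<times> nat \<Rightarrow> nat set" where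
  "face S C p = {v \<in> S. fst p < v \<and> v < snd p \<and>
     (\<forall>q\<in>C. q \<noteq> p \<and> {fst q..snd q} \<subseteq> {fst p..snd p} \<longrightarrow> v \<notin> {fst q..snd q})}"

definition outer_face :: "nat set \<Rightarrow> (nat \<times> nat) set \<Rightarrow> nat set" where
  "outer_face S C = {v \<in> S. \<forall>q\<in>C. v \<notin> {fst q..snd q}}"

definition arc_system :: "nat set \<Rightarrow> (nat \<times> nat) set \<Rightarrow> bool" where
  "arc_system S C \<longleftrightarrow> finite C \<and> C \<subseteq> arcs_on S \<and> noncrossing C \<and>
     (\<forall>p\<in>C. \<forall>q\<in>C. p \<noteq> q \<longrightarrow> fst p \<noteq> fst q \<and> fst p \<noteq> snd q \<and> snd p \<noteq> snd q)"

definition inner_arcs :: "(nat \<times> nat) set \<Rightarrow> nat \<Rightarrow> nat \<Rightarrow> (nat \<times> nat) set" where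
  "inner_arcs C a b = {q \<in> C. a < fst q \<and> fst q < b}"

definition outer_arcs :: "(nat \<times> nat) set \<Rightarrow> nat \<Rightarrow> nat \<Rightarrow> (nat \<times> nat) set" where
  "outer_arcs C a b = {q \<in> C. fst q < a \<or> b < fst q}"

lemma arc_system_subset:
  assumes "arc_system S C" "C' \<subseteq> C" "C' \<subseteq> arcs_on S'"
  shows "arc_system S' C'"
  using assms finite_subset noncrossing_subset unfolding arc_system_def by blast

lemma face_cong:
  assumes "{r \<in> C. r \<noteq> p \<and> {fst r..snd r} \<subseteq> {fst p..snd p}} = {r \<in> C'. r \<noteq> p \<and> {fst r..snd r} \<subseteq> {fst p..snd p}}"
    and "{v \<in> S. fst p < v \<and> v < snd p} = {v \<in> S'. fst p < v \<and> v < snd p}"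
  shows "face S C p = face S' C' p"
  using assms unfolding face_def by blast

definition arc_interval :: "nat set \<Rightarrow> nat \<times> nat \<Rightarrow> nat set" where
  "arc_interval S p = {v \<in> S. fst p \<le> v \<and> v \<le> snd p}"

text \<open>The arc \<open>(a, b)\<close> with the leftmost left end splits an arc system into the arcs
  inside it and the arcs to its right.\<close>
locale first_arc =
  fixes S :: "nat set" and C :: "(nat \<times> nat) set" and a b :: nat
  assumes finite_S: "finite S" and system: "arc_system S C" and arc: "(a, b) \<in> C"
    and first: "\<And>q. q \<in> C \<Longrightarrow> a \<le> fst q"
begin

abbreviation "Cin \<equiv> inner_arcs C a b"
abbreviation "Cout \<equiv> outer_arcs C a b"

lemma arc_bounds: "a \<in> S" "b \<in> S" "a < b"
  using system arc by (auto simp: arc_system_def arcs_on_def)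

lemma arc_less: "q \<in> C \<Longrightarrow> fst q < snd q"
  using system by (auto simp: arc_system_def arcs_on_def)

lemma distinct_ends: "p \<in> C \<Longrightarrow> q \<in> C \<Longrightarrow> p \<noteq> q \<Longrightarrow> fst p \<noteq> fst q \<and> fst p \<noteq> snd q \<and> snd p \<noteq> snd q"
  using system by (simp add: arc_system_def)

lemma no_crossing: "(x, z) \<in> C \<Longrightarrow> (y, w) \<in> C \<Longrightarrow> x < y \<Longrightarrow> y < z \<Longrightarrow> z < w \<Longrightarrow> False"
  using system unfolding arc_system_def noncrossing_def by blast

lemma inner_arc_bounds:
  assumes q: "q \<in> Cin"
  shows "a < fst q \<and> fst q < snd q \<and> snd q < b"
proof -
  have "q \<in> C" "a < fst q" "fst q < b"
    using q by (auto simp: inner_arcs_def)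
  moreover have "q \<noteq> (a, b)"
    using \<open>a < fst q\<close> by auto
  then have "snd q \<noteq> b"
    using distinct_ends[OF \<open>q \<in> C\<close> arc] by simp
  moreover have "\<not> b < snd q"
    using no_crossing[OF arc, of "fst q" "snd q"] \<open>q \<in> C\<close> \<open>a < fst q\<close> \<open>fst q < b\<close> by (cases q) auto
  ultimately show ?thesis
    using arc_less by auto
qed

lemma outer_arc_bounds:
  assumes "q \<in> Cout"
  shows "b < fst q \<and> fst q < snd q"
proof -
  have "q \<in> C" "fst q < a \<or> b < fst q"
    using assms by (simp_all add: outer_arcs_def)
  then show ?thesis
    using first arc_less by fastforce
qed

lemma arcs_decomp: "C = insert (a, b) (Cin \<union> Cout)" "(a, b) \<notin> Cin \<union> Cout" "Cin \<inter> Cout = {}"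
proof -
  have "q \<in> Cin \<union> Cout" if "q \<in> C" "q \<noteq> (a, b)" for q
  proof -
    have "fst q \<noteq> a" "fst q \<noteq> b"
      using distinct_ends[OF that(1) arc] that(2) by auto
    then show ?thesis
      using first[OF that(1)] that(1) by (auto simp: inner_arcs_def outer_arcs_def)
  qed
  then show "C = insert (a, b) (Cin \<union> Cout)"
    using arc by (auto simp: inner_arcs_def outer_arcs_def)
  show "(a, b) \<notin> Cin \<union> Cout" "Cin \<inter> Cout = {}"
    using arc_bounds by (auto simp: inner_arcs_def outer_arcs_def)
qed

lemma arc_ends_in: "q \<in> C \<Longrightarrow> fst q \<in> S \<and> snd q \<in> S"
  using system by (auto simp: arc_system_def arcs_on_def)

lemma inner_arcs_subset: "Cin \<subseteq> arcs_on (inner S a b)"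
proof
  fix q assume "q \<in> Cin"
  then show "q \<in> arcs_on (inner S a b)"
    using arc_ends_in[of q] inner_arc_bounds[of q]
    by (cases q) (auto simp: arcs_on_def inner_def inner_arcs_def)
qed

lemma outer_arcs_subset: "Cout \<subseteq> arcs_on (outer S a b)"
proof
  fix q assume "q \<in> Cout"
  then show "q \<in> arcs_on (outer S a b)"
    using arc_ends_in[of q] outer_arc_bounds[of q]
    by (cases q) (auto simp: arcs_on_def outer_def outer_arcs_def)
qed

lemma system_inner: "arc_system (inner S a b) Cin"
  by (rule arc_system_subset[OF system _ inner_arcs_subset]) (simp add: inner_arcs_def)

lemma system_outer: "arc_system (outer S a b) Cout"
  by (rule arc_system_subset[OF system _ outer_arcs_subset]) (simp add: outer_arcs_def)

lemma card_arcs_less: "card Cin < card C" "card Cout < card C"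
proof -
  have "finite C"
    using system by (simp add: arc_system_def)
  then show "card Cin < card C" "card Cout < card C"
    using arcs_decomp by (auto intro!: psubset_card_mono)
qed

lemma nested_in_inner:
  assumes q: "q \<in> Cin" and r: "r \<in> C" "{fst r..snd r} \<subseteq> {fst q..snd q}"
  shows "r \<in> Cin"
proof -
  have "fst q \<le> fst r" "snd r \<le> snd q"
    using r(2) arc_less[OF r(1)] by auto
  then have "r \<noteq> (a, b)" "r \<notin> Cout"
    using inner_arc_bounds[OF q] outer_arc_bounds[of r] by auto
  then show ?thesis
    using r(1) arcs_decomp(1) by blast
qed

lemma nested_in_outer:
  assumes q: "q \<in> Cout" and r: "r \<in> C" "{fst r..snd r} \<subseteq> {fst q..snd q}"
  shows "r \<in> Cout"
proof -
  have "fst q \<le> fst r"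
    using r(2) arc_less[OF r(1)] by auto
  then have "r \<noteq> (a, b)" "r \<notin> Cin"
    using outer_arc_bounds[OF q] inner_arc_bounds[of r] arc_bounds(3) by auto
  then show ?thesis
    using r(1) arcs_decomp(1) by blast
qed

lemma face_inner:
  assumes q: "q \<in> Cin"
  shows "face (inner S a b) Cin q = face S C q"
proof -
  have "{r \<in> Cin. r \<noteq> q \<and> {fst r..snd r} \<subseteq> {fst q..snd q}} = {r \<in> C. r \<noteq> q \<and> {fst r..snd r} \<subseteq> {fst q..snd q}}"
    using nested_in_inner[OF q] by (auto simp: inner_arcs_def)
  moreover have "{v \<in> inner S a b. fst q < v \<and> v < snd q} = {v \<in> S. fst q < v \<and> v < snd q}"
    using inner_arc_bounds[OF q] by (auto simp: inner_def)
  ultimately show ?thesis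
    by (rule face_cong)
qed

lemma face_outer:
  assumes q: "q \<in> Cout"
  shows "face (outer S a b) Cout q = face S C q"
proof -
  have "{r \<in> Cout. r \<noteq> q \<and> {fst r..snd r} \<subseteq> {fst q..snd q}} = {r \<in> C. r \<noteq> q \<and> {fst r..snd r} \<subseteq> {fst q..snd q}}"
    using nested_in_outer[OF q] by (auto simp: outer_arcs_def)
  moreover have "{v \<in> outer S a b. fst q < v \<and> v < snd q} = {v \<in> S. fst q < v \<and> v < snd q}"
    using outer_arc_bounds[OF q] by (auto simp: outer_def)
  ultimately show ?thesis
    by (rule face_cong)
qed

lemma outer_face_inner: "outer_face (inner S a b) Cin = face S C (a, b)"
proof -
  have "{r \<in> C. r \<noteq> (a, b) \<and> {fst r..snd r} \<subseteq> {a..b}} = Cin"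
  proof (intro equalityI subsetI)
    fix r assume "r \<in> {r \<in> C. r \<noteq> (a, b) \<and> {fst r..snd r} \<subseteq> {a..b}}"
    then have "r \<in> C" "r \<noteq> (a, b)" "fst r \<le> b"
      using arc_less[of r] by auto
    then show "r \<in> Cin"
      using arcs_decomp(1) outer_arc_bounds[of r] by fastforce
  next
    fix r assume "r \<in> Cin"
    then show "r \<in> {r \<in> C. r \<noteq> (a, b) \<and> {fst r..snd r} \<subseteq> {a..b}}"
      using inner_arc_bounds[of r] arcs_decomp(2) by (auto simp: inner_arcs_def)
  qed
  then show ?thesis
    unfolding outer_face_def face_def inner_def fst_conv snd_conv by blast
qed

lemma outer_face_outer: "outer_face (outer S a b) Cout = outer_face S C"
proof (intro equalityI subsetI)
  fix v assume "v \<in> outer_face (outer S a b) Cout"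
  then have v: "v \<in> S" "v < a \<or> b < v" "\<forall>q\<in>Cout. v \<notin> {fst q..snd q}"
    by (auto simp: outer_face_def outer_def)
  have "v \<notin> {fst q..snd q}" if q: "q \<in> C" for q
  proof -
    consider "q = (a, b)" | "q \<in> Cin" | "q \<in> Cout"
      using q arcs_decomp(1) by blast
    then show ?thesis
      using v inner_arc_bounds[of q] by cases auto
  qed
  then show "v \<in> outer_face S C"
    using v(1) by (simp add: outer_face_def)
next
  fix v assume "v \<in> outer_face S C"
  then have "v \<in> S" "\<forall>q\<in>C. v \<notin> {fst q..snd q}"
    by (simp_all add: outer_face_def)
  moreover have "v < a \<or> b < v"
    using arc \<open>\<forall>q\<in>C. v \<notin> {fst q..snd q}\<close> by force
  ultimately show "v \<in> outer_face (outer S a b) Cout"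
    unfolding outer_face_def outer_def outer_arcs_def by blast
qed

lemma finite_inner_outer: "finite (inner S a b)" "finite (outer S a b)"
  using finite_S by (simp_all add: inner_def outer_def)

lemma card_inner_outer: "card S = card (inner S a b) + card (outer S a b) + 2"
proof -
  have "S = inner S a b \<union> (outer S a b \<union> {a, b})"
    using arc_bounds by (auto simp: inner_def outer_def)
  also have "card \<dots> = card (inner S a b) + (card (outer S a b) + 2)"
    using finite_inner_outer arc_bounds
    by (subst card_Un_disjoint; auto simp: card_Un_disjoint inner_def outer_def)+
  finally show ?thesis
    by simp
qed

lemma card_matchings_containing_inner_outer:
  "card {M \<in> nc_matchings S. C \<subseteq> M}
    = card {M1 \<in> nc_matchings (inner S a b). Cin \<subseteq> M1} * card {M2 \<in> nc_matchings (outer S a b). Cout \<subseteq> M2}"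
  using card_nc_matchings_containing_split[OF arc_bounds inner_arcs_subset outer_arcs_subset]
  by (simp flip: arcs_decomp(1))

lemma arc_interval_inner: "q \<in> Cin \<Longrightarrow> arc_interval (inner S a b) q = arc_interval S q"
  using inner_arc_bounds[of q] by (auto simp: arc_interval_def inner_def)

lemma arc_interval_outer: "q \<in> Cout \<Longrightarrow> arc_interval (outer S a b) q = arc_interval S q"
  using outer_arc_bounds[of q] by (auto simp: arc_interval_def outer_def)

lemma prod_arcs: "(\<Prod>p\<in>C. f p) = f (a, b) * (\<Prod>q\<in>Cin. f q) * (\<Prod>q\<in>Cout. f q)"
proof -
  have "finite (Cin \<union> Cout)"
    using system arcs_decomp(1) finite_subset[of "Cin \<union> Cout" C] by (auto simp: arc_system_def)
  have "(\<Prod>p\<in>C. f p) = (\<Prod>p\<in>insert (a, b) (Cin \<union> Cout). f p)"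
    using arcs_decomp(1) by (rule arg_cong)
  also have "\<dots> = f (a, b) * (\<Prod>q\<in>Cin. f q) * (\<Prod>q\<in>Cout. f q)"
    using \<open>finite (Cin \<union> Cout)\<close> arcs_decomp(2,3) by (simp add: prod.union_disjoint mult.assoc)
  finally show ?thesis .
qed

lemma sum_arcs: "(\<Sum>p\<in>C. f p) = f (a, b) + (\<Sum>q\<in>Cin. f q) + (\<Sum>q\<in>Cout. f q)"
proof -
  have "finite (Cin \<union> Cout)"
    using system arcs_decomp(1) finite_subset[of "Cin \<union> Cout" C] by (auto simp: arc_system_def)
  have "(\<Sum>p\<in>C. f p) = (\<Sum>p\<in>insert (a, b) (Cin \<union> Cout). f p)"
    using arcs_decomp(1) by (rule arg_cong)
  also have "\<dots> = f (a, b) + (\<Sum>q\<in>Cin. f q) + (\<Sum>q\<in>Cout. f q)"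
    using \<open>finite (Cin \<union> Cout)\<close> arcs_decomp(2,3) by (simp add: sum.union_disjoint add.assoc)
  finally show ?thesis .
qed

lemma card_arc_interval_first: "card (arc_interval S (a, b)) = card (inner S a b) + 2"
proof -
  have "arc_interval S (a, b) = inner S a b \<union> {a, b}"
    using arc_bounds by (auto simp: arc_interval_def inner_def)
  then show ?thesis
    using finite_inner_outer(1) arc_bounds by (simp add: inner_def)
qed

end

lemma arc_system_induct [consumes 2, case_names empty split]:
  assumes "finite S" "arc_system S C"
    and empty: "\<And>S. finite S \<Longrightarrow> P S {}"
    and first_arc: "\<And>S C a b. first_arc S C a b \<Longrightarrow>
      P (inner S a b) (inner_arcs C a b) \<Longrightarrow> P (outer S a b) (outer_arcs C a b) \<Longrightarrow> P S C"
  shows "P S C"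
  using assms(1,2)
proof (induction "card C" arbitrary: S C rule: less_induct)
  case less
  show ?case
  proof (cases "C = {}")
    case True
    then show ?thesis
      using empty less.prems(1) by simp
  next
    case False
    have "finite C"
      using less.prems(2) by (simp add: arc_system_def)
    define a where "a = Min (fst ` C)"
    obtain b where "(a, b) \<in> C"
      using Min_in[of "fst ` C"] \<open>finite C\<close> False unfolding a_def by fastforce
    moreover have "a \<le> fst q" if "q \<in> C" for q
      using \<open>finite C\<close> that unfolding a_def by simp
    ultimately interpret first_arc S C a b
      using less.prems by unfold_locales
    show ?thesis
    proof (rule first_arc)
      show "first_arc S C a b"
        by unfold_locales
      show "P (inner S a b) (inner_arcs C a b)"
        by (rule less.hyps[OF card_arcs_less(1) finite_inner_outer(1) system_inner])
      show "P (outer S a b) (outer_arcs C a b)"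
        by (rule less.hyps[OF card_arcs_less(2) finite_inner_outer(2) system_outer])
    qed
  qed
qed

lemma card_nc_matchings_containing_arcs:
  assumes "finite S" "arc_system S C"
  shows "real (card {M \<in> nc_matchings S. C \<subseteq> M})
    = nc_count (card (outer_face S C)) * (\<Prod>p\<in>C. nc_count (card (face S C p)))"
  using assms
proof (induction rule: arc_system_induct)
  case (empty S)
  then show ?case
    by (simp add: outer_face_def card_nc_matchings)
next
  case (split S C a b)
  interpret first_arc S C a b
    by (fact split.hyps)
  let ?f = "\<lambda>p. nc_count (card (face S C p))"
  have "real (card {M \<in> nc_matchings S. C \<subseteq> M})
      = real (card {M1 \<in> nc_matchings (inner S a b). Cin \<subseteq> M1})
        * real (card {M2 \<in> nc_matchings (outer S a b). Cout \<subseteq> M2})"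
    by (simp add: card_matchings_containing_inner_outer)
  also have "\<dots> = (?f (a, b) * (\<Prod>q\<in>Cin. ?f q)) * (nc_count (card (outer_face S C)) * (\<Prod>q\<in>Cout. ?f q))"
    using split.IH by (simp add: outer_face_inner outer_face_outer face_inner face_outer cong: prod.cong)
  also have "\<dots> = nc_count (card (outer_face S C)) * (\<Prod>p\<in>C. ?f p)"
    by (simp add: prod_arcs ac_simps)
  finally show ?case .
qed

lemma card_eq_faces:
  assumes "finite S" "arc_system S C"
  shows "card S = card (outer_face S C) + (\<Sum>p\<in>C. card (face S C p) + 2)"
  using assms
proof (induction rule: arc_system_induct)
  case (empty S)
  then show ?case
    by (simp add: outer_face_def)
next
  case (split S C a b)
  interpret first_arc S C a b
    by (fact split.hyps)
  show ?case
    using split.IH card_inner_outer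
    by (simp add: sum_arcs outer_face_inner outer_face_outer face_inner face_outer cong: sum.cong)
qed

lemma even_faces:
  assumes "finite S" "arc_system S C"
  shows "even (card S) \<Longrightarrow> (\<forall>p\<in>C. even (card (arc_interval S p))) \<Longrightarrow>
    even (card (outer_face S C)) \<and> (\<forall>p\<in>C. even (card (face S C p)))"
  using assms
proof (induction rule: arc_system_induct)
  case (empty S)
  then show ?case
    by (simp add: outer_face_def)
next
  case (split S C a b)
  interpret first_arc S C a b
    by (fact split.hyps)
  have sub: "Cin \<subseteq> C" "Cout \<subseteq> C"
    by (auto simp: inner_arcs_def outer_arcs_def)
  have "even (card (inner S a b))"
    using split.prems(2) arc card_arc_interval_first by fastforce
  moreover have "even (card (outer S a b))"
    using split.prems(1) card_inner_outer calculation by simp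
  moreover have "\<forall>q\<in>Cin. even (card (arc_interval (inner S a b) q))"
    "\<forall>q\<in>Cout. even (card (arc_interval (outer S a b) q))"
    using split.prems(2) sub by (auto simp: arc_interval_inner arc_interval_outer)
  ultimately have "even (card (face S C (a, b)))" "\<forall>q\<in>Cin. even (card (face S C q))"
    "even (card (outer_face S C))" "\<forall>q\<in>Cout. even (card (face S C q))"
    using split.IH by (simp_all add: outer_face_inner outer_face_outer face_inner face_outer)
  then show ?case
    using arcs_decomp(1) by auto
qed

section \<open>Valid pairs\<close>

definition pair_arcs :: "nat \<Rightarrow> (nat \<Rightarrow> nat) \<Rightarrow> (nat \<Rightarrow> nat) \<Rightarrow> (nat \<times> nat) set" where
  "pair_arcs s x k = (\<lambda>i. (x i, rend x k i)) ` {..<s}"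

context
  fixes n s :: nat and x k :: "nat \<Rightarrow> nat"
  assumes valid: "valid_pair n s x k"
begin

lemma valid_pair_arc_bounds: "i < s \<Longrightarrow> 0 < k i \<and> 1 \<le> x i \<and> x i < rend x k i \<and> rend x k i \<le> 2 * n"
  using valid by (simp add: valid_pair_def)

lemma inj_on_pair_arc: "inj_on (\<lambda>i. (x i, rend x k i)) {..<s}"
proof (rule inj_onI)
  fix i j assume "i \<in> {..<s}" "j \<in> {..<s}" "(x i, rend x k i) = (x j, rend x k j)"
  then show "i = j"
    using valid unfolding valid_pair_def by (metis lessThan_iff prod.inject)
qed

lemma arc_system_pair_arcs: "arc_system {1..2*n} (pair_arcs s x k)"
  unfolding arc_system_def
proof (intro conjI)
  show "finite (pair_arcs s x k)"
    by (simp add: pair_arcs_def)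
  show "pair_arcs s x k \<subseteq> arcs_on {1..2*n}"
  proof
    fix p assume "p \<in> pair_arcs s x k"
    then obtain i where "i < s" "p = (x i, rend x k i)"
      by (auto simp: pair_arcs_def)
    then show "p \<in> arcs_on {1..2*n}"
      using valid_pair_arc_bounds[of i] by (simp add: arcs_on_def)
  qed
  show "noncrossing (pair_arcs s x k)"
    using valid unfolding noncrossing_def pair_arcs_def valid_pair_def by fastforce
  show "\<forall>p\<in>pair_arcs s x k. \<forall>q\<in>pair_arcs s x k. p \<noteq> q \<longrightarrow> fst p \<noteq> fst q \<and> fst p \<noteq> snd q \<and> snd p \<noteq> snd q"
    using valid unfolding pair_arcs_def valid_pair_def by fastforce
qed

lemma outer_face_pair_arcs: "outer_face {1..2*n} (pair_arcs s x k) = M0 n s x k"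
  by (auto simp: outer_face_def M0_def pair_arcs_def)

lemma face_pair_arcs:
  assumes i: "i < s"
  shows "face {1..2*n} (pair_arcs s x k) (x i, rend x k i) = Mset s x k i"
proof -
  have "(x j, rend x k j) = (x i, rend x k i) \<longleftrightarrow> j = i" if "j < s" for j
    using inj_on_pair_arc i that unfolding inj_on_def by blast
  then show ?thesis
    using valid_pair_arc_bounds[OF i] unfolding face_def Mset_def pair_arcs_def by auto
qed

lemma card_arc_interval_pair_arc:
  assumes i: "i < s"
  shows "card (arc_interval {1..2*n} (x i, rend x k i)) = 2 * k i"
proof -
  have "arc_interval {1..2*n} (x i, rend x k i) = {x i..rend x k i}"
    using valid_pair_arc_bounds[OF i] by (auto simp: arc_interval_def)
  then show ?thesis
    using valid_pair_arc_bounds[OF i] by (simp add: rend_def)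
qed

lemma event_eq_containing_pair_arcs:
  "{M \<in> catalan_matchings n. \<forall>i<s. (x i, rend x k i) \<in> M} = {M \<in> nc_matchings {1..2*n}. pair_arcs s x k \<subseteq> M}"
  by (auto simp: catalan_matchings_eq_nc_matchings pair_arcs_def)

end

lemma probA_eq_catalan:
  assumes valid: "valid_pair n s x k"
  defines "m0 \<equiv> card (M0 n s x k) div 2" and "m \<equiv> \<lambda>i. card (Mset s x k i) div 2"
  shows "n = m0 + (\<Sum>i<s. m i) + s"
    and "probA n s x k = catalan m0 * (\<Prod>i<s. catalan (m i)) / catalan n"
    and "prod_m n s x k = catalan_weight m0 * (\<Prod>i<s. catalan_weight (m i))"
proof -
  let ?S = "{1..2*n}" and ?C = "pair_arcs s x k"
  note system = arc_system_pair_arcs[OF valid]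
  note faces = outer_face_pair_arcs[OF valid] face_pair_arcs[OF valid]
  have C: "?C = (\<lambda>i. (x i, rend x k i)) ` {..<s}"
    by (simp add: pair_arcs_def)
  have sum_C: "(\<Sum>p\<in>?C. f p) = (\<Sum>i<s. f (x i, rend x k i))" for f :: "nat \<times> nat \<Rightarrow> nat"
    unfolding C by (rule sum.reindex[OF inj_on_pair_arc[OF valid], unfolded comp_def])
  have prod_C: "(\<Prod>p\<in>?C. f p) = (\<Prod>i<s. f (x i, rend x k i))" for f :: "nat \<times> nat \<Rightarrow> real"
    unfolding C by (rule prod.reindex[OF inj_on_pair_arc[OF valid], unfolded comp_def])
  have "even (card (outer_face ?S ?C)) \<and> (\<forall>p\<in>?C. even (card (face ?S ?C p)))"
    using card_arc_interval_pair_arc[OF valid] by (intro even_faces[OF _ system]) (auto simp: C)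
  then have card_M0: "card (M0 n s x k) = 2 * m0" and card_Mset: "\<And>i. i < s \<Longrightarrow> card (Mset s x k i) = 2 * m i"
    using faces by (auto simp: m0_def m_def C)
  have "2 * n = card (outer_face ?S ?C) + (\<Sum>p\<in>?C. card (face ?S ?C p) + 2)"
    using card_eq_faces[OF _ system] by simp
  also have "\<dots> = 2 * m0 + (\<Sum>i<s. 2 * m i + 2)"
    using faces card_M0 card_Mset unfolding sum_C by simp
  also have "(\<Sum>i<s. 2 * m i + 2) = 2 * (\<Sum>i<s. m i) + 2 * s"
    by (subst sum.distrib) (simp add: sum_distrib_left)
  finally show "n = m0 + (\<Sum>i<s. m i) + s"
    by simp
  have "real (card {M \<in> catalan_matchings n. \<forall>i<s. (x i, rend x k i) \<in> M})
      = nc_count (card (outer_face ?S ?C)) * (\<Prod>p\<in>?C. nc_count (card (face ?S ?C p)))"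
    unfolding event_eq_containing_pair_arcs[OF valid] by (rule card_nc_matchings_containing_arcs[OF _ system]) simp
  also have "\<dots> = catalan m0 * (\<Prod>i<s. catalan (m i))"
    using faces card_M0 card_Mset unfolding prod_C by (simp add: nc_count_double)
  moreover have "real (card (catalan_matchings n)) = catalan n"
    using card_nc_matchings[of ?S] by (simp add: catalan_matchings_eq_nc_matchings nc_count_double)
  ultimately show "probA n s x k = catalan m0 * (\<Prod>i<s. catalan (m i)) / catalan n"
    by (simp add: probA_def)
  have "(\<Prod>i\<in>{i. i < s \<and> real (card (Mset s x k i)) / 2 \<noteq> 0}. (real (card (Mset s x k i)) / 2) powr (3/2))
      = (\<Prod>i<s. if real (card (Mset s x k i)) / 2 \<noteq> 0 then (real (card (Mset s x k i)) / 2) powr (3/2) else 1)"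
    by (simp add: prod.inter_filter[symmetric] lessThan_def conj_commute)
  also have "\<dots> = (\<Prod>i<s. catalan_weight (m i))"
    by (intro prod.cong) (simp_all add: card_Mset catalan_weight_def)
  finally show "prod_m n s x k = catalan_weight m0 * (\<Prod>i<s. catalan_weight (m i))"
    by (simp add: prod_m_def card_M0 catalan_weight_def)
qed

theorem corollary3p3:
  shows "\<forall>s::nat. 0 < s \<longrightarrow> (\<exists>\<alpha> \<beta> :: real. 0 < \<alpha> \<and> 0 < \<beta> \<and>
     (\<forall>n::nat. \<forall>x k :: nat \<Rightarrow> nat. 1 \<le> n \<longrightarrow> valid_pair n s x k \<longrightarrow>
        \<alpha> * real n powr (3/2) / prod_m n s x k \<le> probA n s x k \<and>
        probA n s x k \<le> \<beta> * real n powr (3/2) / prod_m n s x k))"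
proof (intro allI impI exI conjI)
  fix s n :: nat and x k :: "nat \<Rightarrow> nat"
  assume n: "1 \<le> n" and valid: "valid_pair n s x k"
  note formula = probA_eq_catalan[OF valid]
  note bounds = catalan_ratio_bounds[OF formula(1)]
  have weight_n: "catalan_weight n = real n powr (3/2)"
    using n by (simp add: catalan_weight_def)
  show "1 / (4 ^ s * 6 ^ (s + 1)) * real n powr (3/2) / prod_m n s x k \<le> probA n s x k"
    using bounds(2) unfolding formula(2,3) weight_n by simp
  show "probA n s x k \<le> 6 * real n powr (3/2) / prod_m n s x k"
    using bounds(1) unfolding formula(2,3) weight_n by simp
qed simp_all

end
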